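(* Let $H\subseteq G$ be finite groups such that the interval $[H,G]$ of the subgroup lattice of $G$ is top Boolean. Then $[H,G]$ is $H$-cyclic, i.e. there exists $g\in G$ such that $\langle H,g\rangle=G$.
   Context: The interval $[H,G]$ is the lattice of subgroups $K$ with $H\subseteq K\subseteq G$, ordered by inclusion, with $K_1\vee K_2=\langle K_1,K_2\rangle$ and $K_1\wedge K_2=K_1\cap K_2$. Coatoms of a finite lattice are the maximal elements of $L\setminus\{\hat 1\}$; if $t$ is the meet of all coatoms, the top interval of $L$ is $[t,\hat 1]$. A finite lattice is top Boolean if its top interval is a Boolean lattice (distributive, bounded, every element has a unique complement). An interval $[H,G]$ is $H$-cyclic if there exists $g\in G$ with $\langle Hg\rangle=\langle H,g\rangle=G$. *)

theory Defs
  imports "HOL-Algebra.Algebra"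
begin

definition subgroup_interval :: "('a, 'b) monoid_scheme \<Rightarrow> 'a set \<Rightarrow> 'a set set" where
  "subgroup_interval G H = {K. subgroup K G \<and> H \<subseteq> K}"

definition subgroup_join :: "('a, 'b) monoid_scheme \<Rightarrow> 'a set \<Rightarrow> 'a set \<Rightarrow> 'a set" where
  "subgroup_join G K1 K2 = generate G (K1 \<union> K2)"

definition interval_coatoms :: "('a, 'b) monoid_scheme \<Rightarrow> 'a set \<Rightarrow> 'a set set" where
  "interval_coatoms G H = {K \<in> subgroup_interval G H. K \<noteq> carrier G \<and>
      (\<forall>K' \<in> subgroup_interval G H. K \<subseteq> K' \<and> K' \<noteq> carrier G \<longrightarrow> K' = K)}"

text \<open>Meet of all coatoms (the empty meet being the top element G).\<close>
definition coatom_meet :: "('a, 'b) monoid_scheme \<Rightarrow> 'a set \<Rightarrow> 'a set" where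
  "coatom_meet G H = carrier G \<inter> \<Inter> (interval_coatoms G H)"

definition boolean_lattice_on ::
  "'c set \<Rightarrow> ('c \<Rightarrow> 'c \<Rightarrow> 'c) \<Rightarrow> ('c \<Rightarrow> 'c \<Rightarrow> 'c) \<Rightarrow> 'c \<Rightarrow> 'c \<Rightarrow> bool" where
  "boolean_lattice_on L jn mt bt tp \<longleftrightarrow>
     (\<forall>x\<in>L. \<forall>y\<in>L. \<forall>z\<in>L. mt x (jn y z) = jn (mt x y) (mt x z)) \<and>
     (\<forall>x\<in>L. \<forall>y\<in>L. \<forall>z\<in>L. jn x (mt y z) = mt (jn x y) (jn x z)) \<and>
     (\<forall>x\<in>L. \<exists>!y. y \<in> L \<and> jn x y = tp \<and> mt x y = bt)"

text \<open>[H,G] is top Boolean: its top interval [t,G], t the meet of the coatoms,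
  is a Boolean lattice (with join = generated subgroup, meet = intersection).\<close>
definition top_boolean :: "('a, 'b) monoid_scheme \<Rightarrow> 'a set \<Rightarrow> bool" where
  "top_boolean G H \<longleftrightarrow>
     boolean_lattice_on (subgroup_interval G (coatom_meet G H))
       (subgroup_join G) (\<inter>) (coatom_meet G H) (carrier G)"

end

theory Submission
  imports Defs
begin

text \<open>If the top interval is Boolean, distributivity forces every coatom M to be joined to the
  intersection of the other coatoms to give G; hence no coatom contains the intersection of the
  others. For such an irredundant finite family of proper subgroups one builds, one subgroup at a
  time, an element g lying in none of them: if g lies in the new subgroup N, replace it by g a,
  where a lies in all the previous subgroups but not in N. Since G is finite, every proper
  subgroup containing H lies in a coatom, so \<open>\<langle>H, g\<rangle> = G\<close>.\<close>

lemma (in group) generate_subgroup_eq: "subgroup M G \<Longrightarrow> generate G M = M"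
  using generateI[of M M] by blast

lemma (in group) subgroup_mult_mem_iff_right:
  assumes "subgroup M G" "x \<in> M" "y \<in> carrier G"
  shows "x \<otimes> y \<in> M \<longleftrightarrow> y \<in> M"
proof
  assume "x \<otimes> y \<in> M"
  then have "inv x \<otimes> (x \<otimes> y) \<in> M"
    by (rule subgroup.m_closed[OF assms(1) subgroup.m_inv_closed[OF assms(1,2)]])
  moreover have "inv x \<otimes> (x \<otimes> y) = y"
    using subgroup.mem_carrier[OF assms(1,2)] assms(3) by (simp add: m_assoc[symmetric])
  ultimately show "y \<in> M"
    by simp
qed (rule subgroup.m_closed[OF assms(1,2)])

lemma (in group) subgroup_mult_mem_iff_left:
  assumes "subgroup M G" "y \<in> M" "x \<in> carrier G"
  shows "x \<otimes> y \<in> M \<longleftrightarrow> x \<in> M"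
proof
  assume "x \<otimes> y \<in> M"
  then have "(x \<otimes> y) \<otimes> inv y \<in> M"
    by (rule subgroup.m_closed[OF assms(1) _ subgroup.m_inv_closed[OF assms(1,2)]])
  moreover have "(x \<otimes> y) \<otimes> inv y = x"
    using subgroup.mem_carrier[OF assms(1,2)] assms(3) by (simp add: m_assoc)
  ultimately show "x \<in> M"
    by simp
next
  assume "x \<in> M"
  then show "x \<otimes> y \<in> M"
    by (rule subgroup.m_closed[OF assms(1) _ assms(2)])
qed

lemma (in group) avoid_irredundant_subgroups:
  assumes "finite S" "\<And>N. N \<in> S \<Longrightarrow> subgroup N G"
    and "\<And>N. N \<in> S \<Longrightarrow> \<exists>a \<in> carrier G. a \<notin> N \<and> (\<forall>M \<in> S - {N}. a \<in> M)"
  shows "\<exists>g \<in> carrier G. \<forall>N \<in> S. g \<notin> N"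
  using assms
proof (induction S rule: finite_induct)
  case empty
  show ?case
    using one_closed by blast
next
  case (insert N S)
  have "\<exists>a \<in> carrier G. a \<notin> N' \<and> (\<forall>M \<in> S - {N'}. a \<in> M)" if "N' \<in> S" for N'
    using insert.prems(2)[of N'] that by blast
  with insert.IH insert.prems(1) obtain g where g: "g \<in> carrier G" "\<forall>M \<in> S. g \<notin> M"
    by blast
  show ?case
  proof (cases "g \<in> N")
    case False
    with g show ?thesis by blast
  next
    case True
    from insert.prems(2)[of N] insert.hyps(2) obtain a
      where a: "a \<in> carrier G" "a \<notin> N" "\<forall>M \<in> S. a \<in> M"
      by auto
    have "g \<otimes> a \<notin> M" if "M \<in> insert N S" for M
    proof -
      have M: "subgroup M G"
        using insert.prems(1) that .
      show ?thesis
      proof (cases "M = N")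
        case True
        with subgroup_mult_mem_iff_right[OF M _ a(1)] \<open>g \<in> N\<close> a(2) show ?thesis
          by simp
      next
        case False
        with that have "M \<in> S"
          by simp
        with subgroup_mult_mem_iff_left[OF M _ g(1)] a(3) g(2) show ?thesis
          by simp
      qed
    qed
    with g a show ?thesis by blast
  qed
qed

lemma interval_coatomsD:
  assumes "M \<in> interval_coatoms G H"
  shows "subgroup M G" "H \<subseteq> M" "M \<noteq> carrier G"
  using assms unfolding interval_coatoms_def subgroup_interval_def by auto

lemma interval_coatoms_maximal:
  assumes "M \<in> interval_coatoms G H" "subgroup K G" "M \<subseteq> K" "K \<noteq> carrier G"
  shows "K = M"
  using assms interval_coatomsD(2)[OF assms(1)]
  unfolding interval_coatoms_def subgroup_interval_def by blast

lemma finite_interval_coatoms: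
  assumes "finite (carrier G)"
  shows "finite (interval_coatoms G H)"
proof (rule finite_subset)
  show "interval_coatoms G H \<subseteq> Pow (carrier G)"
    using interval_coatomsD(1) subgroup.subset by blast
qed (use assms in simp)

lemma proper_subgroup_le_interval_coatom:
  assumes "finite (carrier G)" "subgroup K G" "H \<subseteq> K" "K \<noteq> carrier G"
  shows "\<exists>M \<in> interval_coatoms G H. K \<subseteq> M"
proof -
  define P where "P = {K'. subgroup K' G \<and> K \<subseteq> K' \<and> K' \<noteq> carrier G}"
  have "finite P"
    by (rule finite_subset[of _ "Pow (carrier G)"])
       (use assms(1) subgroup.subset in \<open>auto simp: P_def\<close>)
  moreover have "K \<in> P"
    using assms unfolding P_def by blast
  ultimately obtain M where M: "M \<in> P" "\<forall>K' \<in> P. M \<subseteq> K' \<longrightarrow> M = K'"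
    using finite_has_maximal by blast
  have "K' = M" if "K' \<in> subgroup_interval G H" "M \<subseteq> K'" "K' \<noteq> carrier G" for K'
  proof -
    have "K' \<in> P"
      using that M(1) unfolding P_def subgroup_interval_def by auto
    with M(2) that(2) show ?thesis
      by blast
  qed
  with M(1) assms(3) have "M \<in> interval_coatoms G H"
    unfolding P_def interval_coatoms_def subgroup_interval_def by auto
  with M(1) show ?thesis
    unfolding P_def by blast
qed

lemma (in group) generate_union_interval_coatoms:
  assumes "M \<in> interval_coatoms G H" "N \<in> interval_coatoms G H" "M \<noteq> N"
  shows "generate G (M \<union> N) = carrier G"
proof (rule ccontr)
  assume proper: "generate G (M \<union> N) \<noteq> carrier G"
  have sub: "subgroup (generate G (M \<union> N)) G"
    using subgroup.subset[OF interval_coatomsD(1)[OF assms(1)]]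
      subgroup.subset[OF interval_coatomsD(1)[OF assms(2)]]
    by (intro generate_is_subgroup) simp
  have incl: "M \<subseteq> generate G (M \<union> N)" "N \<subseteq> generate G (M \<union> N)"
    by (auto intro: generate.incl)
  have "generate G (M \<union> N) = M" "generate G (M \<union> N) = N"
    using interval_coatoms_maximal[OF assms(1) sub incl(1) proper]
      interval_coatoms_maximal[OF assms(2) sub incl(2) proper] by simp_all
  with assms(3) show False by simp
qed

lemma (in group) Inter_interval_coatoms_in_top_interval:
  assumes "S \<subseteq> interval_coatoms G H"
  shows "carrier G \<inter> \<Inter> S \<in> subgroup_interval G (coatom_meet G H)"
proof -
  have "subgroup (\<Inter> (insert (carrier G) S)) G"
    using assms interval_coatomsD(1) subgroup_self by (intro subgroups_Inter) auto
  moreover have "coatom_meet G H \<subseteq> carrier G \<inter> \<Inter> S"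
    using assms unfolding coatom_meet_def by blast
  ultimately show ?thesis
    unfolding subgroup_interval_def by (simp add: Int_commute)
qed

lemma (in group) interval_coatom_in_top_interval:
  assumes "M \<in> interval_coatoms G H"
  shows "M \<in> subgroup_interval G (coatom_meet G H)"
proof -
  have "carrier G \<inter> \<Inter> {M} = M"
    using interval_coatomsD(1)[OF assms] subgroup.subset by blast
  then show ?thesis
    using Inter_interval_coatoms_in_top_interval[of "{M}" H] assms by simp
qed

lemma top_boolean_generate_distrib:
  assumes "top_boolean G H"
    and "K1 \<in> subgroup_interval G (coatom_meet G H)"
    and "K2 \<in> subgroup_interval G (coatom_meet G H)"
    and "K3 \<in> subgroup_interval G (coatom_meet G H)"
  shows "generate G (K1 \<union> (K2 \<inter> K3)) = generate G (K1 \<union> K2) \<inter> generate G (K1 \<union> K3)"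
  using assms unfolding top_boolean_def boolean_lattice_on_def subgroup_join_def by blast

lemma (in group) generate_interval_coatom_meet_others:
  assumes "top_boolean G H" "finite S" "S \<subseteq> interval_coatoms G H"
    "M \<in> interval_coatoms G H" "M \<notin> S"
  shows "generate G (M \<union> (carrier G \<inter> \<Inter> S)) = carrier G"
  using assms(2-)
proof (induction S rule: finite_induct)
  case empty
  then have "M \<union> (carrier G \<inter> \<Inter> {}) = carrier G"
    using interval_coatomsD(1) subgroup.subset by blast
  then show ?case
    using generate_subgroup_eq subgroup_self by simp
next
  case (insert N S)
  have N: "N \<in> interval_coatoms G H" "N \<noteq> M"
    using insert.prems by auto
  have meet: "carrier G \<inter> \<Inter> (insert N S) = N \<inter> (carrier G \<inter> \<Inter> S)"
    by auto
  have "generate G (M \<union> (N \<inter> (carrier G \<inter> \<Inter> S)))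
      = generate G (M \<union> N) \<inter> generate G (M \<union> (carrier G \<inter> \<Inter> S))"
    using insert.prems N(1) by (intro top_boolean_generate_distrib[OF assms(1)]
        interval_coatom_in_top_interval Inter_interval_coatoms_in_top_interval) auto
  also have "\<dots> = carrier G"
    using generate_union_interval_coatoms[OF insert.prems(2) N(1) N(2)[symmetric]]
      insert.IH insert.prems by auto
  finally show ?case
    by (simp only: meet)
qed

lemma (in group) top_boolean_interval_coatoms_irredundant:
  assumes "top_boolean G H" "finite (carrier G)" "N \<in> interval_coatoms G H"
  shows "\<exists>a \<in> carrier G. a \<notin> N \<and> (\<forall>M \<in> interval_coatoms G H - {N}. a \<in> M)"
proof -
  let ?others = "carrier G \<inter> \<Inter> (interval_coatoms G H - {N})"
  have "generate G (N \<union> ?others) = carrier G"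
    using assms finite_interval_coatoms
    by (intro generate_interval_coatom_meet_others) auto
  moreover have "generate G (N \<union> ?others) = N" if "?others \<subseteq> N"
    using that generate_subgroup_eq[OF interval_coatomsD(1)[OF assms(3)]]
    by (simp add: sup.absorb1)
  ultimately have "\<not> ?others \<subseteq> N"
    using interval_coatomsD(3)[OF assms(3)] by auto
  then show ?thesis
    by blast
qed

theorem theorem3p2:
  fixes G :: "('a, 'b) monoid_scheme" and H :: "'a set"
  assumes "group G" and "finite (carrier G)" and "subgroup H G"
    and "top_boolean G H"
  shows "\<exists>g \<in> carrier G. generate G (H \<union> {g}) = carrier G"
proof -
  interpret group G by fact
  have "\<exists>g \<in> carrier G. \<forall>M \<in> interval_coatoms G H. g \<notin> M"
    by (rule avoid_irredundant_subgroups[OF finite_interval_coatoms[OF assms(2)]])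
       (simp_all add: interval_coatomsD(1) top_boolean_interval_coatoms_irredundant[OF assms(4,2)])
  then obtain g where g: "g \<in> carrier G" "\<And>M. M \<in> interval_coatoms G H \<Longrightarrow> g \<notin> M"
    by auto
  let ?K = "generate G (H \<union> {g})"
  have sub: "subgroup ?K G"
    using g(1) subgroup.subset[OF assms(3)] by (intro generate_is_subgroup) simp
  have H: "H \<subseteq> ?K" and "g \<in> ?K"
    by (auto intro: generate.incl)
  have "?K = carrier G"
  proof (rule ccontr)
    assume "?K \<noteq> carrier G"
    then obtain M where "M \<in> interval_coatoms G H" "?K \<subseteq> M"
      using proper_subgroup_le_interval_coatom[OF assms(2) sub H] by auto
    with g(2) \<open>g \<in> ?K\<close> show False
      by auto
  qed
  with g(1) show ?thesis
    by auto
qed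

end
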